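(* Let $\mathbf{A}$ be an algebra, let $\mathrm{Adm}(\mathbf{A})$ denote the set of all reflexive compatible binary relations on $\mathbf{A}$, and let $F,G:\mathrm{Adm}(\mathbf{A})\to\mathrm{Adm}(\mathbf{A})$ be arbitrary functions. Suppose that $\mathbf{A}$ has a ternary term $t$ which is Mal'cev modulo $F$ and $G$, i.e. for all $a,b\in A$ and all $R\in\mathrm{Adm}(\mathbf{A})$ with $aRb$ we have $(a,t(a,b,b))\in F(R)$ and $(t(a,a,b),b)\in G(R)$. Then for all $R,S,R_1,R_2,\dots\in\mathrm{Adm}(\mathbf{A})$ and all (arbitrary) binary relations $\theta,\theta_1,\theta_2\subseteq A^2$, the following hold: (i) If $a,b,c,d\in A$ satisfy $aRb$, $b\,\theta_1\,c$, $a\,\theta_2\,d$, $dSc$ and $b\,\theta\, d$, then $(a,c)\in F(R)\circ\overline{\theta_2\cup\theta\cup\theta_1}\circ G(S)$. (ii) $R\circ\theta\circ S\subseteq F(R)\circ\overline{(R\circ\theta)\cup(\theta\circ S)}\circ G(S)$. (iii) $R\circ S\subseteq F(R)\circ\overline{R\cup S}\circ G(S)\subseteq F(R)\circ S\circ R\circ G(S)$. (iv) For every $n\ge 0$, $R\circ_{n+2}S\subseteq F(R)\circ\big(\overline{F(R)\cup F(S)}\big)^n\circ\overline{R\cup S}\circ\big(\overline{G(R)\cup G(S)}\big)^n\circ G(S^\bullet)$, where $S^\bullet=S$ if $n$ is even and $S^\bullet=R$ if $n$ is odd. (v) $R+S\subseteq (F(R)+F(S))\circ\overline{R\cup S}\circ(G(R)+G(S))\subseteq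 (F(R)+F(S))\circ R\circ S\circ(G(R)+G(S))$. (vi) $R\circ R\subseteq F(R)\circ R\circ G(R)$. (vii) For every $n\ge 0$, $R^{n+1}\subseteq (F(R))^n\circ R\circ (G(R))^n$. (viii) $R^*\subseteq (F(R))^*\circ R\circ (G(R))^*$. (ix) $R^-\subseteq F(R^-)\circ R\circ G(R^-)$, and $R\subseteq F(R)\circ R^-\circ G(R)$. (x) $R+S^-\subseteq (F(R)+F(S^-))\circ\overline{R\cup S}\circ(G(R)+G(S^-))\subseteq (F(R)+F(S^-))\circ R\circ S\circ(G(R)+G(S^-))$. (xi) $\mathrm{Cg}(R)\subseteq (F(R)+F(R^-))\circ R\circ (G(R)+G(R^-))$. (xii) For $n\ge 2$, $R_1\circ R_2\circ\dots\circ R_n\subseteq F(R_1)\circ\overline{F(R_1)\cup F(R_2)}\circ\overline{F(R_1)\cup F(R_2)\cup F(R_3)}\circ\dots\circ\overline{F(R_1)\cup\dots\cup F(R_{n-2})}\circ\overline{F(R_1)\cup\dots\cup F(R_{n-1})}\circ\overline{R_1\cup R_2\cup\dots\cup R_n}\circ\overline{G(R_2)\cup G(R_3)\cup\dots\cup G(R_n)}\circ\overline{G(R_3)\cup\dots\cup G(R_n)}\circ\dots\circ\overline{G(R_{n-2})\cup G(R_{n-1})\cup G(R_n)}\circ\overline{G(R_{n-1})\cup G(R_n)}\circ G(R_n)$. (xiii) $R_1+R_2+\dots+R_n\subseteq\big(F(R_1)+F(R_2)+\dots+F(R_n)\big)\circ\overline{R_1\cup R_2\cup\dots\cup R_n}\circ\big(G(R_1)+G(R_2)+\dots+G(R_n)\big)$.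 (xiv) $\mathrm{Cg}(R_1\cup R_2\cup\dots\cup R_n)\subseteq\big(F(R_1)+F(R_1^-)+F(R_2)+F(R_2^-)+\dots+F(R_n)+F(R_n^-)\big)\circ\overline{R_1\cup R_2\cup\dots\cup R_n}\circ\big(G(R_1)+G(R_1^-)+G(R_2)+G(R_2^-)+\dots+G(R_n)+G(R_n^-)\big)$.
   Context: "Admissible" and "compatible" mean the same thing (closed under the basic operations of the algebra, coordinatewise). Relational composition: $R\circ S=\{(a,c):\exists b\,(aRb \text{ and } bSc)\}$. $R\circ_n S$ denotes $R\circ S\circ R\circ S\circ\cdots$ with $n-1$ occurrences of $\circ$ (i.e. $n$ alternating factors starting with $R$). $R^n=R\circ_n R$, with the convention $R^0$ = the identity relation. $R+S=\bigcup_{n\ge1}R\circ_n S$, and $R_1+R_2+\dots+R_n$ is the analogous union of all finite compositions of the $R_i$ (iterated $+$). $R^-$ is the converse of $R$, $R^*$ is the transitive closure of $R$, $\mathrm{Cg}(R)$ is the smallest congruence containing $R$, and $\overline{R}$ denotes the least compatible relation containing $R$. *)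

theory Defs
  imports Main
begin

text \<open>An algebra is given by a carrier set A and a set of basic operations,
each a pair (n, f) of an arity n and a function f on lists of length n.\<close>

definition algebra :: "'a set \<Rightarrow> (nat \<times> ('a list \<Rightarrow> 'a)) set \<Rightarrow> bool" where
  "algebra A ops \<longleftrightarrow>
     (\<forall>(n, f) \<in> ops. \<forall>xs. length xs = n \<and> set xs \<subseteq> A \<longrightarrow> f xs \<in> A)"

inductive_set term3 :: "(nat \<times> ('a list \<Rightarrow> 'a)) set \<Rightarrow> ('a \<Rightarrow> 'a \<Rightarrow> 'a \<Rightarrow> 'a) set"
  for ops where
  proj1: "(\<lambda>x y z. x) \<in> term3 ops"
| proj2: "(\<lambda>x y z. y) \<in> term3 ops"
| proj3: "(\<lambda>x y z. z) \<in> term3 ops"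
| app: "(n, f) \<in> ops \<Longrightarrow> length ts = n \<Longrightarrow> (\<forall>t\<in>set ts. t \<in> term3 ops)
        \<Longrightarrow> (\<lambda>x y z. f (map (\<lambda>t. t x y z) ts)) \<in> term3 ops"

definition compatible :: "(nat \<times> ('a list \<Rightarrow> 'a)) set \<Rightarrow> 'a rel \<Rightarrow> bool" where
  "compatible ops R \<longleftrightarrow>
     (\<forall>(n, f) \<in> ops. \<forall>xs ys. length xs = n \<and> length ys = n \<and>
        list_all2 (\<lambda>x y. (x, y) \<in> R) xs ys \<longrightarrow> (f xs, f ys) \<in> R)"

definition Adm :: "'a set \<Rightarrow> (nat \<times> ('a list \<Rightarrow> 'a)) set \<Rightarrow> 'a rel set" where
  "Adm A ops = {R. R \<subseteq> A \<times> A \<and> refl_on A R \<and> compatible ops R}"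

text \<open>Least compatible relation on A containing R (the overline).\<close>
definition ccl :: "'a set \<Rightarrow> (nat \<times> ('a list \<Rightarrow> 'a)) set \<Rightarrow> 'a rel \<Rightarrow> 'a rel" where
  "ccl A ops R = \<Inter>{S. S \<subseteq> A \<times> A \<and> compatible ops S \<and> R \<subseteq> S}"

definition Cg :: "'a set \<Rightarrow> (nat \<times> ('a list \<Rightarrow> 'a)) set \<Rightarrow> 'a rel \<Rightarrow> 'a rel" where
  "Cg A ops R = \<Inter>{S. equiv A S \<and> compatible ops S \<and> R \<subseteq> S}"

text \<open>Alternating composition R o_n S with n factors, starting with R (n \<ge> 1).\<close>
fun altc :: "'a rel \<Rightarrow> 'a rel \<Rightarrow> nat \<Rightarrow> 'a rel" where
  "altc R S 0 = Id"
| "altc R S (Suc 0) = R"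
| "altc R S (Suc (Suc n)) = R O altc S R (Suc n)"

definition rplus :: "'a rel \<Rightarrow> 'a rel \<Rightarrow> 'a rel" where
  "rplus R S = (\<Union>n\<in>{1..}. altc R S n)"

fun comp_list :: "'a rel list \<Rightarrow> 'a rel" where
  "comp_list [] = Id"
| "comp_list (R # Rs) = R O comp_list Rs"

definition rplus_list :: "'a rel list \<Rightarrow> 'a rel" where
  "rplus_list Rs = \<Union>{comp_list ws | ws. ws \<noteq> [] \<and> set ws \<subseteq> set Rs}"

end

(* Everything rests on one computation: if a R b and d S c, then
     a  F(R)  t(a,b,b)  ccl(K)  t(d,d,c)  G(S)  c
   as soon as (a,d), (b,d), (b,c) lie in K, because t preserves the compatible relation ccl(K).
   Taking for K the union of R O theta and theta O S bounds R O theta O S.  Applying this bound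
   at both ends of a chain R_1 O ... O R_n reduces the chain to its two subchains of length n - 1,
   and any compatible relation containing both absorbs ccl(K); induction on n gives the layered
   bound (xii) and its special cases.  The same induction, with the transitive closures of the
   F(R_i) and G(R_i) as outer factors, bounds R_1 + ... + R_n, and hence Cg, which is the
   transitive closure of the symmetrised generators.  Converses are handled by the same
   computation: (b,a) in S gives  a  F(S^-1)  t(a,b,b)  S  t(a,a,b)  G(S^-1)  b. *)

theory Submission
  imports Defs
begin

lemma compatibleI:
  "(\<And>n f xs ys. (n, f) \<in> ops \<Longrightarrow> length xs = n \<Longrightarrow> length ys = n \<Longrightarrow>
     list_all2 (\<lambda>x y. (x, y) \<in> R) xs ys \<Longrightarrow> (f xs, f ys) \<in> R) \<Longrightarrow> compatible ops R"
  unfolding compatible_def by blast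

lemma compatibleD:
  assumes "compatible ops R" "(n, f) \<in> ops" "length xs = n"
    and "list_all2 (\<lambda>x y. (x, y) \<in> R) xs ys"
  shows "(f xs, f ys) \<in> R"
proof -
  have "length ys = n" using assms(3,4) by (auto dest: list_all2_lengthD)
  with assms show ?thesis unfolding compatible_def by blast
qed

lemma compatible_Id: "compatible ops Id"
  unfolding compatible_def by (simp add: list.rel_eq)

lemma compatible_relcomp:
  assumes "compatible ops R" "compatible ops S"
  shows "compatible ops (R O S)"
proof (rule compatibleI)
  fix n f xs ys
  assume f: "(n, f) \<in> ops" and n: "length xs = n"
    and "list_all2 (\<lambda>x y. (x, y) \<in> R O S) xs ys"
  then obtain zs where xz: "list_all2 (\<lambda>x y. (x, y) \<in> R) xs zs"
    and zy: "list_all2 (\<lambda>x y. (x, y) \<in> S) zs ys"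
    by (auto simp flip: relcompp_relcomp_eq simp: list.rel_compp)
  have "length zs = n" using xz n by (auto dest: list_all2_lengthD)
  then show "(f xs, f ys) \<in> R O S"
    using compatibleD[OF assms(1) f n xz] compatibleD[OF assms(2) f _ zy] by blast
qed

lemma compatible_converse: "compatible ops R \<Longrightarrow> compatible ops (R\<inverse>)"
  by (rule compatibleI) (auto intro: compatibleD simp: list_all2_conv_all_nth)

lemma compatible_Inter: "(\<And>S. S \<in> SS \<Longrightarrow> compatible ops S) \<Longrightarrow> compatible ops (\<Inter>SS)"
  by (rule compatibleI) (auto intro!: compatibleD elim!: list_all2_mono)

lemma compatible_Times: "algebra A ops \<Longrightarrow> compatible ops (A \<times> A)"
proof (rule compatibleI)
  fix n f xs ys
  assume "algebra A ops" "(n, f) \<in> ops" "length xs = n" "length ys = n"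
    and "list_all2 (\<lambda>x y. (x, y) \<in> A \<times> A) xs ys"
  moreover from this have "set xs \<subseteq> A" "set ys \<subseteq> A"
    by (auto simp: list_all2_conv_all_nth set_conv_nth)
  ultimately show "(f xs, f ys) \<in> A \<times> A"
    unfolding algebra_def by auto
qed

lemma term3_compatible:
  assumes "t \<in> term3 ops" "compatible ops R"
    and "(a1, b1) \<in> R" "(a2, b2) \<in> R" "(a3, b3) \<in> R"
  shows "(t a1 a2 a3, t b1 b2 b3) \<in> R"
  using assms(1)
proof (induction rule: term3.induct)
  case (app n f ts)
  have "list_all2 (\<lambda>x y. (x, y) \<in> R) (map (\<lambda>t. t a1 a2 a3) ts) (map (\<lambda>t. t b1 b2 b3) ts)"
    using app.IH by (auto simp: list_all2_map1 list_all2_map2 list_all2_same)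
  then show ?case using compatibleD[OF assms(2) app.hyps(1)] app.hyps(2) by simp
qed (use assms(3-5) in auto)

text \<open>No hypothesis on K is needed: if K is not contained in A \<times> A, the family
  in the definition of ccl is empty and ccl A ops K = UNIV.\<close>
lemma subset_ccl: "K \<subseteq> ccl A ops K"
  unfolding ccl_def by blast

lemma subset_ccl_UN: "j \<in> I \<Longrightarrow> X j \<subseteq> ccl A ops (\<Union>i\<in>I. X i)"
  using subset_ccl by blast

lemma ccl_compatible: "compatible ops (ccl A ops K)"
  unfolding ccl_def by (rule compatible_Inter) blast

lemma ccl_mono: "K \<subseteq> K' \<Longrightarrow> ccl A ops K \<subseteq> ccl A ops K'"
  unfolding ccl_def by (rule Inter_anti_mono) blast

lemma ccl_UN_mono: "I \<subseteq> J \<Longrightarrow> ccl A ops (\<Union>i\<in>I. X i) \<subseteq> ccl A ops (\<Union>i\<in>J. X i)"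
  by (intro ccl_mono UN_mono) auto

lemma ccl_least:
  assumes "algebra A ops" "K \<subseteq> A \<times> A" "K \<subseteq> T" "compatible ops T"
  shows "ccl A ops K \<subseteq> T"
proof -
  have "compatible ops (T \<inter> A \<times> A)"
    using compatible_Inter[of "{T, A \<times> A}"] assms(1,4) compatible_Times by auto
  then have "ccl A ops K \<subseteq> T \<inter> A \<times> A"
    unfolding ccl_def using assms(2,3) by (intro Inter_lower) blast
  then show ?thesis by blast
qed

lemma ccl_eq_self: "algebra A ops \<Longrightarrow> R \<subseteq> A \<times> A \<Longrightarrow> compatible ops R \<Longrightarrow> ccl A ops R = R"
  by (simp add: ccl_least subset_ccl subset_antisym)

lemma AdmD:
  assumes "R \<in> Adm A ops"
  shows Adm_subset_Times: "R \<subseteq> A \<times> A" and Adm_compatible: "compatible ops R"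
    and Adm_refl: "x \<in> A \<Longrightarrow> (x, x) \<in> R"
  using assms unfolding Adm_def refl_on_def by auto

lemma Adm_converse: "R \<in> Adm A ops \<Longrightarrow> R\<inverse> \<in> Adm A ops"
  unfolding Adm_def refl_on_def by (auto simp: compatible_converse)

lemma ccl_Un_subset_relcomp:
  assumes "algebra A ops" "R \<in> Adm A ops" "S \<in> Adm A ops"
  shows "ccl A ops (R \<union> S) \<subseteq> S O R"
proof (rule ccl_least[OF assms(1)])
  show "R \<union> S \<subseteq> A \<times> A" using assms(2,3) by (auto dest: Adm_subset_Times)
  show "R \<union> S \<subseteq> S O R"
    using assms(2,3) by (fastforce dest: Adm_subset_Times Adm_refl)
  show "compatible ops (S O R)"
    using assms(2,3) by (simp add: Adm_compatible compatible_relcomp)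
qed

lemma comp_list_append: "comp_list (xs @ ys) = comp_list xs O comp_list ys"
  by (induction xs) (auto simp: O_assoc)

lemma comp_list_map_mono:
  "(\<And>k. k \<in> set ks \<Longrightarrow> f k \<subseteq> g k) \<Longrightarrow> comp_list (map f ks) \<subseteq> comp_list (map g ks)"
  by (induction ks) (auto intro!: relcomp_mono)

lemma comp_list_subset_relpow:
  "(\<And>T. T \<in> set Ts \<Longrightarrow> T \<subseteq> X) \<Longrightarrow> length Ts = n \<Longrightarrow> comp_list Ts \<subseteq> X ^^ n"
proof (induction Ts arbitrary: n)
  case (Cons T Ts)
  then obtain m where n: "n = Suc m" "length Ts = m" by auto
  with Cons have "comp_list (T # Ts) \<subseteq> X O X ^^ m" by (auto intro!: relcomp_mono)
  then show ?case unfolding n(1) by (simp add: relpow_commute)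
qed simp

lemma compatible_comp_list: "(\<And>T. T \<in> set Ts \<Longrightarrow> compatible ops T) \<Longrightarrow> compatible ops (comp_list Ts)"
  by (induction Ts) (auto simp: compatible_Id compatible_relcomp)

lemma comp_list_refl: "set Ts \<subseteq> Adm A ops \<Longrightarrow> x \<in> A \<Longrightarrow> (x, x) \<in> comp_list Ts"
  by (induction Ts) (auto dest: Adm_refl)

lemma comp_list_subset_trancl:
  "Ts \<noteq> [] \<Longrightarrow> set Ts \<subseteq> TT \<Longrightarrow> comp_list Ts \<subseteq> (\<Union>TT)\<^sup>+"
proof (induction Ts rule: comp_list.induct)
  case (2 T Ts)
  then show ?case by (cases "Ts = []") (auto intro: trancl_into_trancl2)
qed simp

lemma trancl_Union_eq:
  "(\<Union>TT)\<^sup>+ = \<Union>{comp_list Ts | Ts. Ts \<noteq> [] \<and> set Ts \<subseteq> TT}"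
proof (intro equalityI subsetI)
  fix p assume "p \<in> (\<Union>TT)\<^sup>+"
  moreover obtain x y where p: "p = (x, y)" by (cases p)
  ultimately have "(x, y) \<in> (\<Union>TT)\<^sup>+" by simp
  then have "\<exists>Ts. Ts \<noteq> [] \<and> set Ts \<subseteq> TT \<and> (x, y) \<in> comp_list Ts"
  proof (induction rule: trancl_induct)
    case (base y)
    then obtain T where "T \<in> TT" "(x, y) \<in> T" by blast
    then show ?case by (intro exI[of _ "[T]"]) auto
  next
    case (step y z)
    then obtain Ts T where "Ts \<noteq> []" "set Ts \<subseteq> TT" "(x, y) \<in> comp_list Ts" "T \<in> TT" "(y, z) \<in> T"
      by blast
    then show ?case by (intro exI[of _ "Ts @ [T]"]) (auto simp: comp_list_append)
  qed
  then show "p \<in> \<Union>{comp_list Ts | Ts. Ts \<noteq> [] \<and> set Ts \<subseteq> TT}" using p by blast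
qed (use comp_list_subset_trancl in blast)

lemma comp_list_subset_Times: "Ts \<noteq> [] \<Longrightarrow> set Ts \<subseteq> Adm A ops \<Longrightarrow> comp_list Ts \<subseteq> A \<times> A"
  using comp_list_subset_trancl[of Ts "set Ts"] trancl_subset_Sigma[of "\<Union>(set Ts)" A]
  by (auto dest!: Adm_subset_Times)

lemma rplus_list_eq_trancl: "rplus_list Rs = (\<Union>(set Rs))\<^sup>+"
  unfolding rplus_list_def trancl_Union_eq ..

lemma comp_list_subset_append:
  assumes "Ts \<noteq> []" "set Ts \<subseteq> Adm A ops" "set Us \<subseteq> Adm A ops" "set Vs \<subseteq> Adm A ops"
  shows "comp_list Ts \<subseteq> comp_list (Us @ Ts @ Vs)"
proof clarify
  fix x y assume xy: "(x, y) \<in> comp_list Ts"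
  then have "x \<in> A" "y \<in> A" using comp_list_subset_Times[OF assms(1,2)] by auto
  then have "(x, x) \<in> comp_list Us" "(y, y) \<in> comp_list Vs"
    using assms(3,4) by (auto intro: comp_list_refl)
  with xy show "(x, y) \<in> comp_list (Us @ Ts @ Vs)" by (auto simp: comp_list_append)
qed

text \<open>The transitive closure is the directed union of the compositions of finitely many members
  of TT: by reflexivity, finitely many such compositions embed into their concatenation.\<close>
lemma compatible_trancl_Union:
  assumes TT: "TT \<subseteq> Adm A ops" "TT \<noteq> {}"
  shows "compatible ops ((\<Union>TT)\<^sup>+)"
proof (rule compatibleI)
  fix n f xs ys
  assume f: "(n, f) \<in> ops" "length xs = n" and xy: "list_all2 (\<lambda>x y. (x, y) \<in> (\<Union>TT)\<^sup>+) xs ys"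
  have "\<exists>Ts. Ts \<noteq> [] \<and> set Ts \<subseteq> TT \<and> list_all2 (\<lambda>x y. (x, y) \<in> comp_list Ts) xs ys"
    using xy
  proof (induction rule: list_all2_induct)
    case Nil
    from TT(2) obtain T where "T \<in> TT" by blast
    then show ?case by (intro exI[of _ "[T]"]) simp
  next
    case (Cons x xs y ys)
    then obtain Us Ts where Us: "Us \<noteq> []" "set Us \<subseteq> TT" "(x, y) \<in> comp_list Us"
      and Ts: "Ts \<noteq> []" "set Ts \<subseteq> TT" "list_all2 (\<lambda>x y. (x, y) \<in> comp_list Ts) xs ys"
      unfolding trancl_Union_eq by blast
    have "comp_list Us \<subseteq> comp_list (Us @ Ts)" "comp_list Ts \<subseteq> comp_list (Us @ Ts)"
      using comp_list_subset_append[of Us A ops "[]" Ts]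
        comp_list_subset_append[of Ts A ops Us "[]"]
        Us(1,2) Ts(1,2) TT(1) by auto
    with Us(3) Ts(3) have "list_all2 (\<lambda>x y. (x, y) \<in> comp_list (Us @ Ts)) (x # xs) (y # ys)"
      by (auto elim: list_all2_mono)
    then show ?case using Us Ts by (intro exI[of _ "Us @ Ts"]) auto
  qed
  then obtain Ts where Ts: "Ts \<noteq> []" "set Ts \<subseteq> TT"
    and "list_all2 (\<lambda>x y. (x, y) \<in> comp_list Ts) xs ys" by blast
  moreover have "compatible ops (comp_list Ts)"
    using Ts TT(1) by (auto intro: compatible_comp_list Adm_compatible)
  ultimately have "(f xs, f ys) \<in> comp_list Ts" using f by (blast intro: compatibleD)
  then show "(f xs, f ys) \<in> (\<Union>TT)\<^sup>+" using Ts unfolding trancl_Union_eq by blast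
qed

lemma Cg_subset_trancl:
  assumes "TT \<subseteq> Adm A ops" "TT \<noteq> {}" "sym (\<Union>TT)" "U \<subseteq> \<Union>TT"
  shows "Cg A ops U \<subseteq> (\<Union>TT)\<^sup>+"
  unfolding Cg_def
proof (rule Inter_lower, intro CollectI conjI)
  show "equiv A ((\<Union>TT)\<^sup>+)"
  proof (rule equivI)
    show "refl_on A ((\<Union>TT)\<^sup>+)"
      using assms(1,2) by (auto simp: refl_on_def dest: Adm_refl)
    show "sym ((\<Union>TT)\<^sup>+)" by (rule sym_trancl[OF assms(3)])
    show "(\<Union>TT)\<^sup>+ \<subseteq> A \<times> A"
      using assms(1) by (intro trancl_subset_Sigma) (auto dest: Adm_subset_Times)
  qed simp
  show "compatible ops ((\<Union>TT)\<^sup>+)" by (rule compatible_trancl_Union[OF assms(1,2)])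
qed (use assms(4) in auto)

lemma altc_Suc_Suc: "altc R S (Suc (Suc n)) = R O S O altc R S n"
  by (cases n) auto

lemma altc_double: "altc R S (2 * k) = (R O S) ^^ k"
proof (induction k)
  case (Suc k)
  then show ?case
    using relpow_commute[of "R O S" k] by (simp add: altc_Suc_Suc O_assoc del: altc.simps(3))
qed simp

lemma altc_eq_comp_list: "altc R S n = comp_list (map (\<lambda>i. if even i then R else S) [0..<n])"
proof (induction R S n rule: altc.induct)
  case (3 R S n)
  have "[0..<Suc (Suc n)] = 0 # map Suc [0..<Suc n]"
    unfolding map_Suc_upt by (rule upt_conv_Cons) simp
  then have "map (\<lambda>i. if even i then R else S) [0..<Suc (Suc n)]
      = R # map (\<lambda>i. if even i then S else R) [0..<Suc n]"
    by (simp del: upt_Suc add: comp_def)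
  then show ?case using 3 by (simp del: upt_Suc)
qed auto

lemma altc_same: "altc R R n = R ^^ n"
proof (cases n)
  case (Suc m)
  have "altc R R (Suc m) = R ^^ Suc m"
  proof (induction m)
    case (Suc m)
    then have "altc R R (Suc (Suc m)) = R O R ^^ Suc m" by simp
    then show ?case by (metis relpow.simps(2) relpow_commute)
  qed simp
  then show ?thesis using Suc by simp
qed simp

lemma rplus_eq_trancl:
  assumes "R \<in> Adm A ops" "S \<in> Adm A ops"
  shows "rplus R S = (R \<union> S)\<^sup>+"
proof
  have "altc R S n \<subseteq> (\<Union>{R, S})\<^sup>+" if "n \<ge> 1" for n
    unfolding altc_eq_comp_list trancl_Union_eq using that by (intro Union_upper) auto
  then show "rplus R S \<subseteq> (R \<union> S)\<^sup>+" unfolding rplus_def by auto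
  have "R \<union> S \<subseteq> R O S" using assms by (fastforce dest: Adm_subset_Times Adm_refl)
  then have "(R \<union> S)\<^sup>+ \<subseteq> (R O S)\<^sup>+" by (rule trancl_mono_subset)
  also have "\<dots> \<subseteq> rplus R S"
  proof
    fix p assume "p \<in> (R O S)\<^sup>+"
    then obtain k where "k > 0" "p \<in> altc R S (2 * k)"
      by (auto simp: trancl_power altc_double)
    moreover have "2 * k \<in> {1..}" using \<open>k > 0\<close> by simp
    ultimately show "p \<in> rplus R S" unfolding rplus_def by blast
  qed
  finally show "(R \<union> S)\<^sup>+ \<subseteq> rplus R S" .
qed

locale malcev_modulo =
  fixes A :: "'a set" and ops :: "(nat \<times> ('a list \<Rightarrow> 'a)) set"
    and F G :: "'a rel \<Rightarrow> 'a rel" and t :: "'a \<Rightarrow> 'a \<Rightarrow> 'a \<Rightarrow> 'a"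
  assumes alg: "algebra A ops"
    and F_Adm: "\<forall>R \<in> Adm A ops. F R \<in> Adm A ops"
    and G_Adm: "\<forall>R \<in> Adm A ops. G R \<in> Adm A ops"
    and t_term: "t \<in> term3 ops"
    and malcev: "\<forall>a\<in>A. \<forall>b\<in>A. \<forall>R\<in>Adm A ops. (a, b) \<in> R \<longrightarrow>
                   (a, t a b b) \<in> F R \<and> (t a a b, b) \<in> G R"
begin

lemma F_in_Adm: "R \<in> Adm A ops \<Longrightarrow> F R \<in> Adm A ops"
  using F_Adm by blast

lemma G_in_Adm: "R \<in> Adm A ops \<Longrightarrow> G R \<in> Adm A ops"
  using G_Adm by blast

lemma ccl_Adm: "R \<in> Adm A ops \<Longrightarrow> ccl A ops R = R"
  by (simp add: ccl_eq_self[OF alg] Adm_subset_Times Adm_compatible)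

lemma malcev_square:
  assumes "R \<in> Adm A ops" "S \<in> Adm A ops" "(a, b) \<in> R" "(d, c) \<in> S"
    and "(a, d) \<in> K" "(b, d) \<in> K" "(b, c) \<in> K"
  shows "(a, c) \<in> F R O ccl A ops K O G S"
proof -
  have "(a, t a b b) \<in> F R" "(t d d c, c) \<in> G S"
    using assms(1-4) malcev by (blast dest: Adm_subset_Times)+
  moreover have "(t a b b, t d d c) \<in> ccl A ops K"
    using assms(5-7) subset_ccl by (blast intro: term3_compatible[OF t_term ccl_compatible])
  ultimately show ?thesis by blast
qed

lemma relcomp_sandwich_subset:
  assumes "R \<in> Adm A ops" "S \<in> Adm A ops"
  shows "R O \<theta> O S \<subseteq> F R O ccl A ops ((R O \<theta>) \<union> (\<theta> O S)) O G S"
proof clarify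
  fix a b d c assume abdc: "(a, b) \<in> R" "(b, d) \<in> \<theta>" "(d, c) \<in> S"
  moreover have "(b, b) \<in> R" using assms(1) abdc(1) by (blast dest: Adm_subset_Times Adm_refl)
  ultimately show "(a, c) \<in> F R O ccl A ops ((R O \<theta>) \<union> (\<theta> O S)) O G S"
    by (blast intro: malcev_square[OF assms])
qed

lemma relcomp_subset: "R \<in> Adm A ops \<Longrightarrow> S \<in> Adm A ops \<Longrightarrow> R O S \<subseteq> F R O ccl A ops (R \<union> S) O G S"
  using relcomp_sandwich_subset[of R S Id] by simp

lemma subset_relcomp_F_G:
  assumes "R \<in> Adm A ops" "R \<subseteq> D" "F R \<subseteq> X" "G R \<subseteq> Y"
  shows "R \<subseteq> X O D O Y"
proof clarify
  fix a b assume ab: "(a, b) \<in> R"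
  then have "a \<in> A" "b \<in> A" using Adm_subset_Times[OF assms(1)] by auto
  then have "(a, a) \<in> X" "(b, b) \<in> Y"
    using Adm_refl[OF F_in_Adm[OF assms(1)]] Adm_refl[OF G_in_Adm[OF assms(1)]] assms(3,4) by auto
  with ab assms(2) show "(a, b) \<in> X O D O Y" by blast
qed

lemma converse_subset_relcomp_F_G:
  assumes "R \<in> Adm A ops" "R \<subseteq> D" "F (R\<inverse>) \<subseteq> X" "G (R\<inverse>) \<subseteq> Y"
  shows "R\<inverse> \<subseteq> X O D O Y"
proof clarify
  fix b a assume "(b, a) \<in> R"
  moreover have "(a, a) \<in> R" "(b, b) \<in> R"
    using assms(1) \<open>(b, a) \<in> R\<close> by (blast dest: Adm_subset_Times Adm_refl)+
  ultimately have "(a, b) \<in> F (R\<inverse>) O ccl A ops R O G (R\<inverse>)"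
    using Adm_converse[OF assms(1)] by (blast intro: malcev_square)
  then show "(a, b) \<in> X O D O Y"
    using assms ccl_Adm[OF assms(1)] by blast
qed

text \<open>Splitting a composite T O \<theta> O T' at both ends, the sandwich bound reduces it to
  the shorter composites T O \<theta> and \<theta> O T'.\<close>
lemma trancl_Union_subset_relcomp:
  assumes TT: "TT \<subseteq> Adm A ops"
    and X: "trans X" "\<And>T. T \<in> TT \<Longrightarrow> F T \<subseteq> X"
    and Y: "trans Y" "\<And>T. T \<in> TT \<Longrightarrow> G T \<subseteq> Y"
    and P: "compatible ops (X O D O Y)" "\<Union>TT \<subseteq> X O D O Y"
  shows "(\<Union>TT)\<^sup>+ \<subseteq> X O D O Y"
proof -
  have "comp_list Ts \<subseteq> X O D O Y" if "Ts \<noteq> []" "set Ts \<subseteq> TT" for Ts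
    using that
  proof (induction "length Ts" arbitrary: Ts rule: less_induct)
    case less
    then obtain T Us where Ts: "Ts = T # Us" by (cases Ts) auto
    show ?case
    proof (cases "Us = []")
      case True
      with Ts less.prems P(2) show ?thesis by auto
    next
      case False
      then obtain Vs T' where Us: "Us = Vs @ [T']" by (cases Us rule: rev_cases) auto
      let ?\<theta> = "comp_list Vs"
      have T: "T \<in> TT" "T' \<in> TT" using less.prems Ts Us by auto
      have "T O ?\<theta> \<subseteq> X O D O Y" "?\<theta> O T' \<subseteq> X O D O Y"
        using less.hyps[of "T # Vs"] less.hyps[of "Vs @ [T']"] less.prems Ts Us
        by (auto simp: comp_list_append)
      moreover have "T O ?\<theta> \<union> ?\<theta> O T' \<subseteq> A \<times> A"
        using comp_list_subset_Times[of "T # Vs" A ops] comp_list_subset_Times[of "Vs @ [T']" A ops]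
          less.prems TT Ts Us
        by (auto simp: comp_list_append)
      ultimately have ccl: "ccl A ops (T O ?\<theta> \<union> ?\<theta> O T') \<subseteq> X O D O Y"
        by (intro ccl_least[OF alg _ _ P(1)]) auto
      have "comp_list Ts = T O ?\<theta> O T'" using Ts Us by (simp add: comp_list_append)
      also have "\<dots> \<subseteq> F T O ccl A ops (T O ?\<theta> \<union> ?\<theta> O T') O G T'"
        using T TT by (intro relcomp_sandwich_subset) auto
      also have "\<dots> \<subseteq> X O (X O D O Y) O Y"
        using ccl X(2) Y(2) T by (intro relcomp_mono) auto
      also have "\<dots> \<subseteq> X O D O Y"
        using trans_O_subset[OF X(1)] trans_O_subset[OF Y(1)] by blast
      finally show ?thesis .
    qed
  qed
  then show ?thesis unfolding trancl_Union_eq by blast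
qed

lemma trancl_Union_converse_subset:
  assumes "P \<subseteq> Adm A ops" "N \<subseteq> Adm A ops" "P \<union> N \<noteq> {}"
    and "compatible ops D" "\<Union>P \<subseteq> D" "\<Union>N \<subseteq> D"
  defines "TT \<equiv> P \<union> converse ` N"
  shows "(\<Union>TT)\<^sup>+ \<subseteq> (\<Union>(F ` TT))\<^sup>+ O D O (\<Union>(G ` TT))\<^sup>+"
proof (rule trancl_Union_subset_relcomp)
  show TT: "TT \<subseteq> Adm A ops" using assms(1,2) Adm_converse unfolding TT_def by blast
  have "TT \<noteq> {}" using assms(3) unfolding TT_def by blast
  then show "compatible ops ((\<Union>(F ` TT))\<^sup>+ O D O (\<Union>(G ` TT))\<^sup>+)"
    using TT F_in_Adm G_in_Adm
    by (intro compatible_relcomp compatible_trancl_Union assms(4)) auto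
  show "\<Union>TT \<subseteq> (\<Union>(F ` TT))\<^sup>+ O D O (\<Union>(G ` TT))\<^sup>+"
  proof (rule Union_least)
    fix T assume "T \<in> TT"
    then consider "T \<in> P" | R where "R \<in> N" "T = R\<inverse>" unfolding TT_def by blast
    then show "T \<subseteq> (\<Union>(F ` TT))\<^sup>+ O D O (\<Union>(G ` TT))\<^sup>+"
    proof cases
      case 1
      then show ?thesis using assms(1,5) \<open>T \<in> TT\<close> by (intro subset_relcomp_F_G) auto
    next
      case (2 R)
      then have "R \<in> Adm A ops" "R \<subseteq> D" using assms(2,6) by blast+
      moreover have "F (R\<inverse>) \<subseteq> (\<Union>(F ` TT))\<^sup>+" "G (R\<inverse>) \<subseteq> (\<Union>(G ` TT))\<^sup>+"
        using 2 \<open>T \<in> TT\<close> by auto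
      ultimately show ?thesis unfolding \<open>T = R\<inverse>\<close> by (rule converse_subset_relcomp_F_G)
    qed
  qed
qed auto

lemma trancl_Union_subset_ccl:
  "TT \<subseteq> Adm A ops \<Longrightarrow> TT \<noteq> {} \<Longrightarrow>
    (\<Union>TT)\<^sup>+ \<subseteq> (\<Union>(F ` TT))\<^sup>+ O ccl A ops (\<Union>TT) O (\<Union>(G ` TT))\<^sup>+"
  using trancl_Union_converse_subset[of TT "{}" "ccl A ops (\<Union>TT)"]
  by (simp add: ccl_compatible subset_ccl)

definition F_layers :: "(nat \<Rightarrow> 'a rel) \<Rightarrow> nat \<Rightarrow> nat \<Rightarrow> 'a rel" where
  "F_layers Rs a b = comp_list (map (\<lambda>k. ccl A ops (\<Union>i\<in>{a..k}. F (Rs i))) [Suc a..<b])"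

definition G_layers :: "(nat \<Rightarrow> 'a rel) \<Rightarrow> nat \<Rightarrow> nat \<Rightarrow> 'a rel" where
  "G_layers Rs a b = comp_list (map (\<lambda>k. ccl A ops (\<Union>i\<in>{k..b}. G (Rs i))) [Suc a..<b])"

lemma F_layers_subset_relpow:
  "(\<And>i. F (Rs i) \<subseteq> X) \<Longrightarrow> F_layers Rs a b \<subseteq> (ccl A ops X) ^^ (b - Suc a)"
  unfolding F_layers_def by (intro comp_list_subset_relpow) (auto intro!: ccl_mono)

lemma G_layers_subset_relpow:
  "(\<And>i. G (Rs i) \<subseteq> Y) \<Longrightarrow> G_layers Rs a b \<subseteq> (ccl A ops Y) ^^ (b - Suc a)"
  unfolding G_layers_def by (intro comp_list_subset_relpow) (auto intro!: ccl_mono)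

lemma compatible_F_layers: "compatible ops (F_layers Rs a b)"
  unfolding F_layers_def by (intro compatible_comp_list) (auto simp: ccl_compatible)

lemma compatible_G_layers: "compatible ops (G_layers Rs a b)"
  unfolding G_layers_def by (intro compatible_comp_list) (auto simp: ccl_compatible)

lemma F_layers_Suc_right:
  assumes "a < c"
  shows "F (Rs a) O F_layers Rs a c \<subseteq> F_layers Rs a (Suc c)"
proof -
  let ?\<Phi> = "\<lambda>k. ccl A ops (\<Union>i\<in>{a..k}. F (Rs i))"
  have "F (Rs a) \<subseteq> ?\<Phi> (Suc a)" by (rule subset_ccl_UN) simp
  moreover have "F_layers Rs a c \<subseteq> comp_list (map (?\<Phi> \<circ> Suc) [Suc a..<c])"
    unfolding F_layers_def by (rule comp_list_map_mono) (auto intro!: ccl_UN_mono)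
  ultimately have "F (Rs a) O F_layers Rs a c \<subseteq> ?\<Phi> (Suc a) O comp_list (map (?\<Phi> \<circ> Suc) [Suc a..<c])"
    by (rule relcomp_mono)
  also have "\<dots> = F_layers Rs a (Suc c)"
    using assms unfolding F_layers_def
    by (simp add: upt_conv_Cons[of a c] flip: map_Suc_upt del: upt_Suc)
  finally show ?thesis .
qed

lemma F_layers_Suc_left:
  assumes "a < c"
  shows "F (Rs (Suc a)) O F_layers Rs (Suc a) (Suc c) \<subseteq> F_layers Rs a (Suc c)"
proof -
  let ?\<Phi> = "\<lambda>k. ccl A ops (\<Union>i\<in>{a..k}. F (Rs i))"
  have "F (Rs (Suc a)) \<subseteq> ?\<Phi> (Suc a)" by (rule subset_ccl_UN) simp
  moreover have "F_layers Rs (Suc a) (Suc c) \<subseteq> comp_list (map ?\<Phi> [Suc (Suc a)..<Suc c])"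
    unfolding F_layers_def by (rule comp_list_map_mono) (auto intro!: ccl_UN_mono)
  ultimately have "F (Rs (Suc a)) O F_layers Rs (Suc a) (Suc c)
      \<subseteq> ?\<Phi> (Suc a) O comp_list (map ?\<Phi> [Suc (Suc a)..<Suc c])"
    by (rule relcomp_mono)
  also have "\<dots> = F_layers Rs a (Suc c)"
    using assms unfolding F_layers_def by (simp add: upt_conv_Cons[of "Suc a" "Suc c"] del: upt_Suc)
  finally show ?thesis .
qed

lemma G_layers_Suc_right:
  assumes "a < c"
  shows "G_layers Rs a c O G (Rs c) \<subseteq> G_layers Rs a (Suc c)"
proof -
  let ?\<Gamma> = "\<lambda>k. ccl A ops (\<Union>i\<in>{k..Suc c}. G (Rs i))"
  have "G_layers Rs a c \<subseteq> comp_list (map ?\<Gamma> [Suc a..<c])"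
    unfolding G_layers_def by (rule comp_list_map_mono) (auto intro!: ccl_UN_mono)
  moreover have "G (Rs c) \<subseteq> ?\<Gamma> c" by (rule subset_ccl_UN) simp
  ultimately have "G_layers Rs a c O G (Rs c) \<subseteq> comp_list (map ?\<Gamma> [Suc a..<c]) O ?\<Gamma> c"
    by (rule relcomp_mono)
  also have "\<dots> = G_layers Rs a (Suc c)"
    using assms unfolding G_layers_def by (simp add: comp_list_append)
  finally show ?thesis .
qed

lemma G_layers_Suc_left:
  assumes "a < c"
  shows "G_layers Rs (Suc a) (Suc c) O G (Rs (Suc c)) \<subseteq> G_layers Rs a (Suc c)"
proof -
  let ?\<Gamma> = "\<lambda>k. ccl A ops (\<Union>i\<in>{k..Suc c}. G (Rs i))"
  have "G_layers Rs (Suc a) (Suc c) \<subseteq> comp_list (map ?\<Gamma> [Suc a..<c])"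
    unfolding G_layers_def map_Suc_upt[symmetric] map_map
    by (rule comp_list_map_mono) (auto intro!: ccl_UN_mono)
  moreover have "G (Rs (Suc c)) \<subseteq> ?\<Gamma> c" by (rule subset_ccl_UN) simp
  ultimately have "G_layers Rs (Suc a) (Suc c) O G (Rs (Suc c))
      \<subseteq> comp_list (map ?\<Gamma> [Suc a..<c]) O ?\<Gamma> c"
    by (rule relcomp_mono)
  also have "\<dots> = G_layers Rs a (Suc c)"
    using assms unfolding G_layers_def by (simp add: comp_list_append)
  finally show ?thesis .
qed

text \<open>The sandwich bound for Rs a O \<theta> O Rs b reduces the claim to the two shorter chains
  Rs a O \<theta> and \<theta> O Rs b, whose bounds are absorbed into the compatible middle part.\<close>
lemma comp_list_upt_subset_layers:
  assumes "a < b" "\<forall>i\<in>{a..b}. Rs i \<in> Adm A ops"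
  shows "comp_list (map Rs [a..<Suc b]) \<subseteq>
    F (Rs a) O F_layers Rs a b O ccl A ops (\<Union>i\<in>{a..b}. Rs i) O G_layers Rs a b O G (Rs b)"
  using assms
proof (induction "b - a" arbitrary: a b rule: less_induct)
  case less
  let ?M = "\<lambda>a b. F_layers Rs a b O ccl A ops (\<Union>i\<in>{a..b}. Rs i) O G_layers Rs a b"
  have Rs: "Rs a \<in> Adm A ops" "Rs b \<in> Adm A ops" using less.prems by auto
  show ?case
  proof (cases "b = Suc a")
    case True
    have "comp_list (map Rs [a..<Suc b]) = Rs a O Rs b" using True by simp
    also have "\<dots> \<subseteq> F (Rs a) O ccl A ops (Rs a \<union> Rs b) O G (Rs b)"
      by (rule relcomp_subset[OF Rs])
    also have "\<dots> \<subseteq> F (Rs a) O ccl A ops (\<Union>i\<in>{a..b}. Rs i) O G (Rs b)"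
      using True by (intro relcomp_mono ccl_mono Un_least UN_upper) auto
    finally show ?thesis using True by (simp add: F_layers_def G_layers_def)
  next
    case False
    then obtain c where b: "b = Suc c" and ac: "a < c" using less.prems(1) by (cases b) auto
    let ?\<theta> = "comp_list (map Rs [Suc a..<b])"
    have left_eq: "Rs a O ?\<theta> = comp_list (map Rs [a..<Suc c])"
      using ac b by (simp add: upt_conv_Cons del: upt_Suc)
    have right_eq: "?\<theta> O Rs b = comp_list (map Rs [Suc a..<Suc b])"
      using ac b by (simp add: comp_list_append O_assoc)
    have "comp_list (map Rs [a..<Suc c]) \<subseteq>
        (F (Rs a) O F_layers Rs a c) O ccl A ops (\<Union>i\<in>{a..c}. Rs i) O (G_layers Rs a c O G (Rs c))"
      unfolding O_assoc by (rule less.hyps) (use less.prems ac b in auto)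
    also have "\<dots> \<subseteq> ?M a b"
      using ac unfolding b
      by (intro relcomp_mono F_layers_Suc_right G_layers_Suc_right ccl_UN_mono) auto
    finally have left: "Rs a O ?\<theta> \<subseteq> ?M a b" unfolding left_eq .
    have "comp_list (map Rs [Suc a..<Suc b]) \<subseteq>
        (F (Rs (Suc a)) O F_layers Rs (Suc a) b) O ccl A ops (\<Union>i\<in>{Suc a..b}. Rs i)
          O (G_layers Rs (Suc a) b O G (Rs b))"
      unfolding O_assoc by (rule less.hyps) (use less.prems ac b in auto)
    also have "\<dots> \<subseteq> ?M a b"
      using ac unfolding b
      by (intro relcomp_mono F_layers_Suc_left G_layers_Suc_left ccl_UN_mono) auto
    finally have right: "?\<theta> O Rs b \<subseteq> ?M a b" unfolding right_eq .
    have "Rs a O ?\<theta> \<union> ?\<theta> O Rs b \<subseteq> A \<times> A"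
      unfolding left_eq right_eq using less.prems(2) ac b
      by (intro Un_least comp_list_subset_Times) auto
    moreover have "compatible ops (?M a b)"
      by (intro compatible_relcomp compatible_F_layers compatible_G_layers ccl_compatible)
    ultimately have ccl: "ccl A ops (Rs a O ?\<theta> \<union> ?\<theta> O Rs b) \<subseteq> ?M a b"
      using left right by (intro ccl_least[OF alg]) auto
    have "comp_list (map Rs [a..<Suc b]) = Rs a O ?\<theta> O Rs b"
      unfolding O_assoc[symmetric] left_eq using ac b
      by (simp add: upt_Suc_append[of a "Suc c"] comp_list_append del: upt_Suc)
    also have "\<dots> \<subseteq> F (Rs a) O ccl A ops (Rs a O ?\<theta> \<union> ?\<theta> O Rs b) O G (Rs b)"
      by (rule relcomp_sandwich_subset[OF Rs])
    also have "\<dots> \<subseteq> F (Rs a) O ?M a b O G (Rs b)"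
      using ccl by (intro relcomp_mono) auto
    finally show ?thesis by (simp add: O_assoc)
  qed
qed

lemma altc_subset:
  assumes "R \<in> Adm A ops" "S \<in> Adm A ops"
  shows "altc R S (n + 2) \<subseteq>
    F R O (ccl A ops (F R \<union> F S)) ^^ n O ccl A ops (R \<union> S)
      O (ccl A ops (G R \<union> G S)) ^^ n O G (if even n then S else R)"
proof -
  define Rs where "Rs i = (if even i then R else S)" for i :: nat
  have "altc R S (n + 2) = comp_list (map Rs [0..<Suc (Suc n)])"
    unfolding altc_eq_comp_list Rs_def by simp
  also have "\<dots> \<subseteq> F (Rs 0) O F_layers Rs 0 (Suc n) O ccl A ops (\<Union>i\<in>{0..Suc n}. Rs i)
      O G_layers Rs 0 (Suc n) O G (Rs (Suc n))"
    using assms by (intro comp_list_upt_subset_layers) (auto simp: Rs_def)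
  also have "\<dots> \<subseteq> F R O (ccl A ops (F R \<union> F S)) ^^ n O ccl A ops (R \<union> S)
      O (ccl A ops (G R \<union> G S)) ^^ n O G (if even n then S else R)"
  proof -
    have "F (Rs i) \<subseteq> F R \<union> F S" "G (Rs i) \<subseteq> G R \<union> G S" for i by (simp_all add: Rs_def)
    then have "F_layers Rs 0 (Suc n) \<subseteq> (ccl A ops (F R \<union> F S)) ^^ n"
      "G_layers Rs 0 (Suc n) \<subseteq> (ccl A ops (G R \<union> G S)) ^^ n"
      using F_layers_subset_relpow[of Rs _ 0 "Suc n"] G_layers_subset_relpow[of Rs _ 0 "Suc n"]
      by simp_all
    then show ?thesis by (intro relcomp_mono ccl_mono) (auto simp: Rs_def)
  qed
  finally show ?thesis .
qed

lemma relpow_Suc_subset: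
  assumes "R \<in> Adm A ops"
  shows "R ^^ (n + 1) \<subseteq> (F R) ^^ n O R O (G R) ^^ n"
proof (cases n)
  case (Suc m)
  have ccl: "ccl A ops (F R) = F R" "ccl A ops R = R" "ccl A ops (G R) = G R"
    using assms by (simp_all add: ccl_Adm F_in_Adm G_in_Adm)
  have "R ^^ (n + 1) = altc R R (m + 2)" using Suc by (simp add: altc_same)
  also have "\<dots> \<subseteq> F R O (F R) ^^ m O R O (G R) ^^ m O G R"
    using altc_subset[OF assms assms, of m] by (simp add: ccl)
  also have "\<dots> = (F R O (F R) ^^ m) O R O ((G R) ^^ m O G R)"
    by (simp add: O_assoc)
  also have "\<dots> = (F R) ^^ n O R O (G R) ^^ n"
    using Suc by (simp add: relpow_commute)
  finally show ?thesis .
qed simp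

lemma relcomp_self_subset: "R \<in> Adm A ops \<Longrightarrow> R O R \<subseteq> F R O R O G R"
  using relcomp_subset[of R R] by (simp add: ccl_Adm)

lemma relcomp_ccl_Un_subset:
  assumes "R \<in> Adm A ops" "S \<in> Adm A ops"
  shows "X O ccl A ops (R \<union> S) O Y \<subseteq> X O R O S O Y"
    and "X O ccl A ops (R \<union> S) O Y \<subseteq> X O S O R O Y"
proof -
  have "ccl A ops (R \<union> S) \<subseteq> R O S" "ccl A ops (R \<union> S) \<subseteq> S O R"
    using ccl_Un_subset_relcomp[OF alg assms(2,1)] ccl_Un_subset_relcomp[OF alg assms]
    by (simp_all add: Un_commute)
  then have "X O ccl A ops (R \<union> S) O Y \<subseteq> X O (R O S) O Y"
    "X O ccl A ops (R \<union> S) O Y \<subseteq> X O (S O R) O Y"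
    by (intro relcomp_mono; simp)+
  then show "X O ccl A ops (R \<union> S) O Y \<subseteq> X O R O S O Y"
    and "X O ccl A ops (R \<union> S) O Y \<subseteq> X O S O R O Y"
    by (simp_all add: O_assoc)
qed

lemma trancl_subset: "R \<in> Adm A ops \<Longrightarrow> R\<^sup>+ \<subseteq> (F R)\<^sup>+ O R O (G R)\<^sup>+"
  using trancl_Union_subset_ccl[of "{R}"] by (simp add: ccl_Adm)

lemma converse_subset:
  assumes "R \<in> Adm A ops"
  shows "R\<inverse> \<subseteq> F (R\<inverse>) O R O G (R\<inverse>)" and "R \<subseteq> F R O R\<inverse> O G R"
  using converse_subset_relcomp_F_G[OF assms] converse_subset_relcomp_F_G[OF Adm_converse[OF assms]]
  by simp_all

lemma rplus_subset:
  assumes "R \<in> Adm A ops" "S \<in> Adm A ops"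
  shows "rplus R S \<subseteq> rplus (F R) (F S) O ccl A ops (R \<union> S) O rplus (G R) (G S)"
  using trancl_Union_subset_ccl[of "{R, S}"] assms
  by (simp add: rplus_eq_trancl[OF assms] rplus_eq_trancl[OF F_in_Adm F_in_Adm, OF assms]
      rplus_eq_trancl[OF G_in_Adm G_in_Adm, OF assms])

lemma rplus_converse_subset:
  assumes "R \<in> Adm A ops" "S \<in> Adm A ops"
  shows "rplus R (S\<inverse>) \<subseteq> rplus (F R) (F (S\<inverse>)) O ccl A ops (R \<union> S) O rplus (G R) (G (S\<inverse>))"
  using trancl_Union_converse_subset[of "{R}" "{S}" "ccl A ops (R \<union> S)"] assms
    subset_ccl[of "R \<union> S" A ops] rplus_eq_trancl[OF assms(1) Adm_converse[OF assms(2)]]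
    rplus_eq_trancl[OF F_in_Adm F_in_Adm, OF assms(1) Adm_converse[OF assms(2)]]
    rplus_eq_trancl[OF G_in_Adm G_in_Adm, OF assms(1) Adm_converse[OF assms(2)]]
  by (simp add: Adm_converse ccl_compatible Un_commute)

lemma Cg_subset:
  assumes "R \<in> Adm A ops"
  shows "Cg A ops R \<subseteq> rplus (F R) (F (R\<inverse>)) O R O rplus (G R) (G (R\<inverse>))"
proof -
  have "Cg A ops R \<subseteq> (R \<union> R\<inverse>)\<^sup>+"
    using Cg_subset_trancl[of "{R, R\<inverse>}" A ops R] assms by (auto simp: Adm_converse sym_Un_converse)
  also have "\<dots> \<subseteq> (F R \<union> F (R\<inverse>))\<^sup>+ O R O (G R \<union> G (R\<inverse>))\<^sup>+"
    using trancl_Union_converse_subset[of "{R}" "{R}" R] assms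
    by (simp add: Adm_compatible Un_commute)
  finally show ?thesis
    using rplus_eq_trancl[OF F_in_Adm F_in_Adm, OF assms Adm_converse[OF assms]]
      rplus_eq_trancl[OF G_in_Adm G_in_Adm, OF assms Adm_converse[OF assms]]
    by simp
qed

lemma comp_list_subset:
  assumes "2 \<le> n" "\<forall>i\<in>{1..n}. Rs i \<in> Adm A ops"
  shows "comp_list (map Rs [1..<n+1]) \<subseteq>
    F (Rs 1)
    O comp_list (map (\<lambda>k. ccl A ops (\<Union>i\<in>{1..k}. F (Rs i))) [2..<n])
    O ccl A ops (\<Union>i\<in>{1..n}. Rs i)
    O comp_list (map (\<lambda>k. ccl A ops (\<Union>i\<in>{k..n}. G (Rs i))) [2..<n])
    O G (Rs n)"
  using comp_list_upt_subset_layers[of 1 n Rs] assms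
  by (simp add: F_layers_def G_layers_def numeral_2_eq_2 del: upt_Suc)

lemma rplus_list_subset:
  assumes "1 \<le> n" "\<forall>i\<in>{1..n}. Rs i \<in> Adm A ops"
  shows "rplus_list (map Rs [1..<n+1]) \<subseteq>
    rplus_list (map (\<lambda>i. F (Rs i)) [1..<n+1])
    O ccl A ops (\<Union>i\<in>{1..n}. Rs i)
    O rplus_list (map (\<lambda>i. G (Rs i)) [1..<n+1])"
proof -
  have "set [1..<n+1] = {1..n}" by auto
  then show ?thesis
    using trancl_Union_subset_ccl[of "Rs ` {1..n}"] assms
    unfolding rplus_list_eq_trancl set_map image_image by auto
qed

lemma Cg_UN_subset:
  assumes "1 \<le> n" "\<forall>i\<in>{1..n}. Rs i \<in> Adm A ops"
  shows "Cg A ops (\<Union>i\<in>{1..n}. Rs i) \<subseteq>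
    rplus_list (concat (map (\<lambda>i. [F (Rs i), F ((Rs i)\<inverse>)]) [1..<n+1]))
    O ccl A ops (\<Union>i\<in>{1..n}. Rs i)
    O rplus_list (concat (map (\<lambda>i. [G (Rs i), G ((Rs i)\<inverse>)]) [1..<n+1]))"
proof -
  let ?P = "Rs ` {1..n}"
  let ?TT = "?P \<union> converse ` ?P"
  have P: "?P \<subseteq> Adm A ops" "?P \<noteq> {}" using assms by auto
  have sets: "set (concat (map (\<lambda>i. [F (Rs i), F ((Rs i)\<inverse>)]) [1..<n+1])) = F ` ?TT"
    "set (concat (map (\<lambda>i. [G (Rs i), G ((Rs i)\<inverse>)]) [1..<n+1])) = G ` ?TT"
    by auto
  have "Cg A ops (\<Union>i\<in>{1..n}. Rs i) \<subseteq> (\<Union>?TT)\<^sup>+"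
    using P by (intro Cg_subset_trancl) (auto simp: Adm_converse sym_def)
  also have "\<dots> \<subseteq> (\<Union>(F ` ?TT))\<^sup>+ O ccl A ops (\<Union>i\<in>{1..n}. Rs i) O (\<Union>(G ` ?TT))\<^sup>+"
    using P subset_ccl[of "\<Union>?P" A ops]
    by (intro trancl_Union_converse_subset) (auto simp: ccl_compatible)
  finally show ?thesis unfolding rplus_list_eq_trancl sets .
qed

end

theorem theorem1:
  fixes A :: "'a set" and ops :: "(nat \<times> ('a list \<Rightarrow> 'a)) set"
    and F G :: "'a rel \<Rightarrow> 'a rel" and t :: "'a \<Rightarrow> 'a \<Rightarrow> 'a \<Rightarrow> 'a"
  assumes alg: "algebra A ops"
    and FAdm: "\<forall>R \<in> Adm A ops. F R \<in> Adm A ops"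
    and GAdm: "\<forall>R \<in> Adm A ops. G R \<in> Adm A ops"
    and tterm: "t \<in> term3 ops"
    and malcev: "\<forall>a\<in>A. \<forall>b\<in>A. \<forall>R\<in>Adm A ops. (a, b) \<in> R \<longrightarrow>
                   (a, t a b b) \<in> F R \<and> (t a a b, b) \<in> G R"
  shows
   \<comment> \<open>(i)\<close>
   "(\<forall>R\<in>Adm A ops. \<forall>S\<in>Adm A ops. \<forall>\<theta> \<theta>1 \<theta>2.
       \<theta> \<subseteq> A \<times> A \<and> \<theta>1 \<subseteq> A \<times> A \<and> \<theta>2 \<subseteq> A \<times> A \<longrightarrow>
       (\<forall>a\<in>A. \<forall>b\<in>A. \<forall>c\<in>A. \<forall>d\<in>A.
          (a, b) \<in> R \<and> (b, c) \<in> \<theta>1 \<and> (a, d) \<in> \<theta>2 \<and> (d, c) \<in> S \<and> (b, d) \<in> \<theta> \<longrightarrow>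
          (a, c) \<in> F R O ccl A ops (\<theta>2 \<union> \<theta> \<union> \<theta>1) O G S))
    \<and> \<comment> \<open>(ii)\<close>
    (\<forall>R\<in>Adm A ops. \<forall>S\<in>Adm A ops. \<forall>\<theta>. \<theta> \<subseteq> A \<times> A \<longrightarrow>
       R O \<theta> O S \<subseteq> F R O ccl A ops ((R O \<theta>) \<union> (\<theta> O S)) O G S)
    \<and> \<comment> \<open>(iii)\<close>
    (\<forall>R\<in>Adm A ops. \<forall>S\<in>Adm A ops.
       R O S \<subseteq> F R O ccl A ops (R \<union> S) O G S
     \<and> F R O ccl A ops (R \<union> S) O G S \<subseteq> F R O S O R O G S)
    \<and> \<comment> \<open>(iv)\<close>
    (\<forall>R\<in>Adm A ops. \<forall>S\<in>Adm A ops. \<forall>n::nat.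
       altc R S (n + 2) \<subseteq>
         F R O (ccl A ops (F R \<union> F S)) ^^ n O ccl A ops (R \<union> S)
           O (ccl A ops (G R \<union> G S)) ^^ n O G (if even n then S else R))
    \<and> \<comment> \<open>(v)\<close>
    (\<forall>R\<in>Adm A ops. \<forall>S\<in>Adm A ops.
       rplus R S \<subseteq> rplus (F R) (F S) O ccl A ops (R \<union> S) O rplus (G R) (G S)
     \<and> rplus (F R) (F S) O ccl A ops (R \<union> S) O rplus (G R) (G S)
         \<subseteq> rplus (F R) (F S) O R O S O rplus (G R) (G S))
    \<and> \<comment> \<open>(vi)\<close>
    (\<forall>R\<in>Adm A ops. R O R \<subseteq> F R O R O G R)
    \<and> \<comment> \<open>(vii)\<close>
    (\<forall>R\<in>Adm A ops. \<forall>n::nat. R ^^ (n + 1) \<subseteq> (F R) ^^ n O R O (G R) ^^ n)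
    \<and> \<comment> \<open>(viii)\<close>
    (\<forall>R\<in>Adm A ops. R\<^sup>+ \<subseteq> (F R)\<^sup>+ O R O (G R)\<^sup>+)
    \<and> \<comment> \<open>(ix)\<close>
    (\<forall>R\<in>Adm A ops. R\<inverse> \<subseteq> F (R\<inverse>) O R O G (R\<inverse>) \<and> R \<subseteq> F R O R\<inverse> O G R)
    \<and> \<comment> \<open>(x)\<close>
    (\<forall>R\<in>Adm A ops. \<forall>S\<in>Adm A ops.
       rplus R (S\<inverse>) \<subseteq> rplus (F R) (F (S\<inverse>)) O ccl A ops (R \<union> S) O rplus (G R) (G (S\<inverse>))
     \<and> rplus (F R) (F (S\<inverse>)) O ccl A ops (R \<union> S) O rplus (G R) (G (S\<inverse>))
         \<subseteq> rplus (F R) (F (S\<inverse>)) O R O S O rplus (G R) (G (S\<inverse>)))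
    \<and> \<comment> \<open>(xi)\<close>
    (\<forall>R\<in>Adm A ops. Cg A ops R \<subseteq> rplus (F R) (F (R\<inverse>)) O R O rplus (G R) (G (R\<inverse>)))
    \<and> \<comment> \<open>(xii)\<close>
    (\<forall>(Rs :: nat \<Rightarrow> 'a rel) n. 2 \<le> n \<and> (\<forall>i\<in>{1..n}. Rs i \<in> Adm A ops) \<longrightarrow>
       comp_list (map Rs [1..<n+1]) \<subseteq>
         F (Rs 1)
         O comp_list (map (\<lambda>k. ccl A ops (\<Union>i\<in>{1..k}. F (Rs i))) [2..<n])
         O ccl A ops (\<Union>i\<in>{1..n}. Rs i)
         O comp_list (map (\<lambda>k. ccl A ops (\<Union>i\<in>{k..n}. G (Rs i))) [2..<n])
         O G (Rs n))
    \<and> \<comment> \<open>(xiii)\<close>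
    (\<forall>(Rs :: nat \<Rightarrow> 'a rel) n. 1 \<le> n \<and> (\<forall>i\<in>{1..n}. Rs i \<in> Adm A ops) \<longrightarrow>
       rplus_list (map Rs [1..<n+1]) \<subseteq>
         rplus_list (map (\<lambda>i. F (Rs i)) [1..<n+1])
         O ccl A ops (\<Union>i\<in>{1..n}. Rs i)
         O rplus_list (map (\<lambda>i. G (Rs i)) [1..<n+1]))
    \<and> \<comment> \<open>(xiv)\<close>
    (\<forall>(Rs :: nat \<Rightarrow> 'a rel) n. 1 \<le> n \<and> (\<forall>i\<in>{1..n}. Rs i \<in> Adm A ops) \<longrightarrow>
       Cg A ops (\<Union>i\<in>{1..n}. Rs i) \<subseteq>
         rplus_list (concat (map (\<lambda>i. [F (Rs i), F ((Rs i)\<inverse>)]) [1..<n+1]))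
         O ccl A ops (\<Union>i\<in>{1..n}. Rs i)
         O rplus_list (concat (map (\<lambda>i. [G (Rs i), G ((Rs i)\<inverse>)]) [1..<n+1])))"
proof -
  interpret malcev_modulo A ops F G t
    using assms by unfold_locales
  show ?thesis
    by (intro conjI ballI allI impI; (elim conjE)?;
        rule malcev_square relcomp_sandwich_subset relcomp_subset relcomp_ccl_Un_subset altc_subset
          rplus_subset relcomp_self_subset relpow_Suc_subset trancl_subset converse_subset
          rplus_converse_subset Cg_subset comp_list_subset rplus_list_subset Cg_UN_subset;
        blast)
qed

end
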